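(* Suppose $a\in C^2(\mathbb{R})$. Let $\tilde\alpha\in\mathbb{R}^2$ be such that $a'(\tilde\alpha_2)>0$. Given $s_0,t_0>0$ sufficiently small depending on the function $a$ and $\tilde\alpha_2$, there exists $0<\epsilon_0<1$ sufficiently small such that for all $0<\epsilon\leq \epsilon_0$, the system \begin{equation*} G^{\epsilon}(\gamma)=0 \end{equation*} has a non-negative solution.
   Context: Let $a:\mathbb{R}\to\mathbb{R}$, $F(\xi)=\int_0^\xi a(s)\,ds$, and for $\alpha\in\mathbb{R}^2$ let $$P_1^{\alpha}(u,v):=\begin{pmatrix} u-\alpha_1 & v-\alpha_2 \\ a(v)-a(\alpha_2) & u-\alpha_1\\ (u-\alpha_1)(a(v)-a(\alpha_2)) & \frac{(u-\alpha_1)^2}{2}+F(v)-F(\alpha_2)-a(\alpha_2)(v-\alpha_2) \end{pmatrix}.$$ Given $s_0,t_0>0$ set $\zeta_1:=P_1^{\tilde\alpha}(\tilde\alpha_1+s_0,\tilde\alpha_2)$, $\zeta_2:=P_1^{\tilde\alpha}(\tilde\alpha_1-s_0,\tilde\alpha_2)$, $\zeta_3:=P_1^{\tilde\alpha}(\tilde\alpha_1,\tilde\alpha_2+t_0)$, $\zeta_4:=P_1^{\tilde\alpha}(\tilde\alpha_1,\tilde\alpha_2-t_0)$. Let $D_1,D_2,D_3$ denote the $(1,2)$, $(2,3)$, $(1,3)$ row-minors of a $3\times 2$ matrix, respectively. Let $A\in M^{4\times 4}$ be the matrix whose $j$-th column is $(D_1(\zeta_j),D_2(\zeta_j),D_3(\zeta_j),1)^T$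 for $j=1,2,3,4$. For $\epsilon>0$ and $\gamma\in\mathbb{R}^4$ define $L^{\epsilon}(\gamma):=A\gamma-(0,0,0,\epsilon)^T$, $Q(\gamma):=\left(D_1\left(\sum_{j=1}^4[\gamma]_j\zeta_j\right),D_2\left(\sum_{j=1}^4[\gamma]_j\zeta_j\right),D_3\left(\sum_{j=1}^4[\gamma]_j\zeta_j\right),0\right)^T$, and $G^{\epsilon}(\gamma):=L^{\epsilon}(\gamma)-Q(\gamma)$. *)

theory Defs
  imports "HOL-Analysis.Analysis"
begin

definition C2_fun :: "(real \<Rightarrow> real) \<Rightarrow> bool" where
  "C2_fun a \<longleftrightarrow> (\<forall>x. a differentiable (at x)) \<and> (\<forall>x. deriv a differentiable (at x))
     \<and> continuous_on UNIV (deriv (deriv a))"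

definition Fint :: "(real \<Rightarrow> real) \<Rightarrow> real \<Rightarrow> real" where
  "Fint a \<xi> = (if 0 \<le> \<xi> then integral {0..\<xi>} a else - integral {\<xi>..0} a)"

definition P1 :: "(real \<Rightarrow> real) \<Rightarrow> real \<Rightarrow> real \<Rightarrow> real \<Rightarrow> real \<Rightarrow> real^2^3" where
  "P1 a al1 al2 u v = vector [
      vector [u - al1, v - al2],
      vector [a v - a al2, u - al1],
      vector [(u - al1) * (a v - a al2),
              (u - al1)^2 / 2 + Fint a v - Fint a al2 - a al2 * (v - al2)]]"

definition D1 :: "real^2^3 \<Rightarrow> real" where
  "D1 M = M$1$1 * M$2$2 - M$1$2 * M$2$1"
definition D2 :: "real^2^3 \<Rightarrow> real" where
  "D2 M = M$2$1 * M$3$2 - M$2$2 * M$3$1"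
definition D3 :: "real^2^3 \<Rightarrow> real" where
  "D3 M = M$1$1 * M$3$2 - M$1$2 * M$3$1"

text \<open>zeta_j for j = 1,2,3,4 (index type 4, where 4 = 0).\<close>
definition zeta :: "(real \<Rightarrow> real) \<Rightarrow> real \<Rightarrow> real \<Rightarrow> real \<Rightarrow> real \<Rightarrow> 4 \<Rightarrow> real^2^3" where
  "zeta a al1 al2 s0 t0 j =
     (if j = 1 then P1 a al1 al2 (al1 + s0) al2
      else if j = 2 then P1 a al1 al2 (al1 - s0) al2
      else if j = 3 then P1 a al1 al2 al1 (al2 + t0)
      else P1 a al1 al2 al1 (al2 - t0))"

definition Amat :: "(real \<Rightarrow> real) \<Rightarrow> real \<Rightarrow> real \<Rightarrow> real \<Rightarrow> real \<Rightarrow> real^4^4" where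
  "Amat a al1 al2 s0 t0 = (\<chi> i j. (vector [D1 (zeta a al1 al2 s0 t0 j), D2 (zeta a al1 al2 s0 t0 j),
                                    D3 (zeta a al1 al2 s0 t0 j), 1] :: real^4) $ i)"

definition Lmap :: "(real \<Rightarrow> real) \<Rightarrow> real \<Rightarrow> real \<Rightarrow> real \<Rightarrow> real \<Rightarrow> real \<Rightarrow> real^4 \<Rightarrow> real^4" where
  "Lmap a al1 al2 s0 t0 \<epsilon> \<gamma> = Amat a al1 al2 s0 t0 *v \<gamma> - vector [0, 0, 0, \<epsilon>]"

definition Qmap :: "(real \<Rightarrow> real) \<Rightarrow> real \<Rightarrow> real \<Rightarrow> real \<Rightarrow> real \<Rightarrow> real^4 \<Rightarrow> real^4" where
  "Qmap a al1 al2 s0 t0 \<gamma> =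
     (let Z = (\<Sum>j\<in>UNIV. (\<gamma> $ j) *\<^sub>R zeta a al1 al2 s0 t0 j) in vector [D1 Z, D2 Z, D3 Z, 0])"

definition Gmap :: "(real \<Rightarrow> real) \<Rightarrow> real \<Rightarrow> real \<Rightarrow> real \<Rightarrow> real \<Rightarrow> real \<Rightarrow> real^4 \<Rightarrow> real^4" where
  "Gmap a al1 al2 s0 t0 \<epsilon> \<gamma> = Lmap a al1 al2 s0 t0 \<epsilon> \<gamma> - Qmap a al1 al2 s0 t0 \<gamma>"

end

theory Submission
  imports Defs
begin

(* On the ansatz gamma = (p/2, p/2, x, y) the third component of G vanishes identically and
   G = 0 becomes two polynomial equations in (p, x, y) together with p + x + y = eps. Their
   coefficients are the increments bp = a(al2 + t0) - a(al2), bm = a(al2) - a(al2 - t0) and the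
   gaps Gp, Gm between F and its tangent at al2 at the points al2 +- t0; as a' > 0 near al2 all
   four are positive once t0 is small. The reduced system then has an explicit one-parameter
   family of nonnegative solutions, continuous in the parameter and trivial at parameter 0, so
   by the intermediate value theorem its total mass p + x + y takes every small value eps. *)

lemma vector_4 [simp]:
  "(vector [x, y, z, w] :: ('a::zero)^4) $ 1 = x"
  "(vector [x, y, z, w] :: ('a::zero)^4) $ 2 = y"
  "(vector [x, y, z, w] :: ('a::zero)^4) $ 3 = z"
  "(vector [x, y, z, w] :: ('a::zero)^4) $ 4 = w"
  unfolding vector_def by simp_all

definition reduced_eqs :: "real \<Rightarrow> real \<Rightarrow> real \<Rightarrow> real \<Rightarrow> real \<Rightarrow> real \<Rightarrow> real \<Rightarrow> real \<Rightarrow> real \<Rightarrow> bool"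
  where "reduced_eqs s t bp bm Gp Gm p x y \<longleftrightarrow>
    p * s^2 - t * (bp * x + bm * y) + t * (x - y) * (x * bp - y * bm) = 0 \<and>
    x * bp * Gp - y * bm * Gm - (x * bp - y * bm) * (p * s^2 / 2 + x * Gp + y * Gm) = 0"

lemma Gmap_symmetric_eq_0_iff:
  fixes a :: "real \<Rightarrow> real" and al2 t :: real
  defines "bp \<equiv> a (al2 + t) - a al2" and "bm \<equiv> a al2 - a (al2 - t)"
    and "Gp \<equiv> Fint a (al2 + t) - Fint a al2 - a al2 * t"
    and "Gm \<equiv> Fint a (al2 - t) - Fint a al2 + a al2 * t"
  shows "Gmap a al1 al2 s t \<epsilon> (vector [p/2, p/2, x, y]) = 0 \<longleftrightarrow>
    reduced_eqs s t bp bm Gp Gm p x y \<and> p + x + y = \<epsilon>"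
  unfolding vec_eq_iff forall_4 reduced_eqs_def
  by (simp add: Gmap_def Lmap_def Qmap_def Amat_def matrix_vector_mult_def sum_4 zeta_def P1_def
      D1_def D2_def D3_def bp_def bm_def Gp_def Gm_def algebra_simps power2_eq_square power3_eq_cube)

lemma Gmap_has_nonneg_zero_if_reduced_eqs:
  fixes a :: "real \<Rightarrow> real"
  assumes "0 \<le> p" "0 \<le> x" "0 \<le> y" "p + x + y = \<epsilon>"
    and "reduced_eqs s t (a (al2 + t) - a al2) (a al2 - a (al2 - t))
      (Fint a (al2 + t) - Fint a al2 - a al2 * t) (Fint a (al2 - t) - Fint a al2 + a al2 * t) p x y"
  shows "\<exists>\<gamma>::real^4. (\<forall>j. 0 \<le> \<gamma> $ j) \<and> Gmap a al1 al2 s t \<epsilon> \<gamma> = 0"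
  using assms
  by (intro exI[of _ "vector [p/2, p/2, x, y]"]) (simp add: forall_4 Gmap_symmetric_eq_0_iff)

lemma Fint_has_real_derivative:
  fixes a :: "real \<Rightarrow> real"
  assumes ca: "continuous_on UNIV a"
  shows "(Fint a has_real_derivative a x) (at x)"
proof -
  define c where "c = min x 0 - 1"
  have rep: "Fint a v = integral {c..v} a - integral {c..0} a" if "v \<in> {c<..}" for v
  proof (cases "0 \<le> v")
    case True
    have "a integrable_on {c..v}" by (intro integrable_continuous_real continuous_on_subset[OF ca]) auto
    then have "integral {c..0} a + integral {0..v} a = integral {c..v} a"
      by (intro Henstock_Kurzweil_Integration.integral_combine) (use True c_def in auto)
    then show ?thesis using True by (simp add: Fint_def)
  next
    case False
    have "a integrable_on {c..0}" by (intro integrable_continuous_real continuous_on_subset[OF ca]) auto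
    then have "integral {c..v} a + integral {v..0} a = integral {c..0} a"
      by (intro Henstock_Kurzweil_Integration.integral_combine) (use False c_def that in auto)
    then show ?thesis using False by (simp add: Fint_def)
  qed
  have "((\<lambda>u. integral {c..u} a) has_real_derivative a x) (at x within {c..x+1})"
    using c_def by (intro integral_has_real_derivative continuous_on_subset[OF ca]) auto
  moreover have "at x within {c..x+1} = at x"
    using c_def by (intro at_within_interior) auto
  ultimately have "((\<lambda>u. integral {c..u} a - integral {c..0} a) has_real_derivative a x) (at x)"
    by (auto intro!: derivative_eq_intros)
  then show ?thesis
    by (rule has_field_derivative_transform_within_open[where S="{c<..}"]) (use c_def rep in auto)
qed

lemma C2_fun_has_real_derivative:
  "C2_fun a \<Longrightarrow> (a has_real_derivative deriv a x) (at x)"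
  unfolding C2_fun_def using DERIV_deriv_iff_real_differentiable by blast

lemma C2_fun_isCont_deriv:
  "C2_fun a \<Longrightarrow> isCont (deriv a) x"
  unfolding C2_fun_def using differentiable_imp_continuous_within by blast

lemma strict_mono_on_near_pos_deriv:
  fixes f f' :: "real \<Rightarrow> real"
  assumes der: "\<And>x. (f has_real_derivative f' x) (at x)"
    and "isCont f' c" and "f' c > 0"
  shows "\<exists>d>0. strict_mono_on {c-d<..<c+d} f"
proof -
  have "\<forall>\<^sub>F x in nhds c. f' x > 0"
    using assms(2,3) order_tendstoD(1) isCont_def tendsto_at_iff_tendsto_nhds by blast
  then obtain d where "d > 0" and pos: "\<And>x. dist x c < d \<Longrightarrow> f' x > 0"
    unfolding eventually_nhds_metric by blast
  have "strict_mono_on {c-d<..<c+d} f"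
  proof (rule strict_mono_onI)
    fix u v assume uv: "u \<in> {c-d<..<c+d}" "v \<in> {c-d<..<c+d}" "u < v"
    show "f u < f v"
    proof (rule DERIV_pos_imp_increasing[OF \<open>u < v\<close>])
      fix x assume "u \<le> x" "x \<le> v"
      with uv have "dist x c < d" by (auto simp: dist_real_def)
      then show "\<exists>y. (f has_real_derivative y) (at x) \<and> y > 0" using der pos by blast
    qed
  qed
  with \<open>d > 0\<close> show ?thesis by blast
qed

lemma above_tangent_if_strict_mono_deriv:
  fixes f F :: "real \<Rightarrow> real"
  assumes der: "\<And>x. (F has_real_derivative f x) (at x)"
    and mono: "strict_mono_on {c-d<..<c+d} f" and t: "0 < t" "t < d"
  shows "F c + f c * t < F (c + t)" and "F c - f c * t < F (c - t)"
proof -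
  define g where "g x = F x - f c * x" for x
  have dg: "(g has_real_derivative f x - f c) (at x)" for x
    unfolding g_def by (auto intro!: derivative_eq_intros der)
  have cg: "continuous_on S g" for S
    using dg by (meson DERIV_isCont continuous_at_imp_continuous_on)
  have "g c < g (c + t)"
  proof (rule DERIV_pos_imp_increasing_open[of c "c + t" g])
    fix x assume "c < x" "x < c + t"
    then have "f c < f x" using mono t by (intro strict_mono_onD[OF mono]) auto
    then show "\<exists>y. (g has_real_derivative y) (at x) \<and> y > 0" using dg[of x] by force
  qed (use t cg in auto)
  then show "F c + f c * t < F (c + t)" by (simp add: g_def algebra_simps)
  have "g (c - 0) < g (c - t)"
  proof (rule DERIV_pos_imp_increasing_open[of 0 t "\<lambda>x. g (c - x)"])
    fix x assume "0 < x" "x < t"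
    then have "f (c - x) < f c" using mono t by (intro strict_mono_onD[OF mono]) auto
    have "((\<lambda>x. c - x) has_real_derivative -1) (at x)"
      by (auto intro!: derivative_eq_intros)
    note DERIV_chain2[OF dg this]
    moreover have "(f (c - x) - f c) * - 1 > 0" using \<open>f (c - x) < f c\<close> by simp
    ultimately show "\<exists>y. ((\<lambda>x. g (c - x)) has_real_derivative y) (at x) \<and> y > 0"
      by blast
  next
    show "continuous_on {0..t} (\<lambda>x. g (c - x))"
      by (intro continuous_intros continuous_on_compose2[OF cg[of UNIV]]) auto
  qed (use t in auto)
  then show "F c - f c * t < F (c - t)" by (simp add: g_def algebra_simps)
qed

text \<open>The parameter is the level \<open>m = p s^2/2 + x Gp + y Gm\<close>. The second reduced equation then
  says \<open>y bm = ratio m * x bp\<close>, the first determines \<open>p\<close>, and the level condition becomes a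
  quadratic equation for \<open>x bp\<close>. Its small root is written in rationalized form \<open>root\<close>, which is
  continuous at \<open>m = 0\<close> and vanishes there.\<close>

locale reduced_system =
  fixes s t bp bm Gp Gm :: real
  assumes pos: "0 < s" "0 < t" "0 < bp" "0 < bm" "0 < Gp" "0 < Gm"
begin

definition ratio :: "real \<Rightarrow> real"
  where "ratio m = (Gp - m) / (Gm - m)"

definition lin_coeff :: "real \<Rightarrow> real"
  where "lin_coeff m = t * (1 + ratio m) / 2 + Gp / bp + ratio m * Gm / bm"

definition curv :: "real \<Rightarrow> real"
  where "curv m = (1 / bp - ratio m / bm) * (1 - ratio m)"

definition disc :: "real \<Rightarrow> real"
  where "disc m = (lin_coeff m)^2 - 2 * t * curv m * m"

definition root :: "real \<Rightarrow> real"
  where "root m = 2 * m / (lin_coeff m + sqrt (disc m))"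

definition p_sol :: "real \<Rightarrow> real"
  where "p_sol m = t * root m * (1 + ratio m - root m * curv m) / s^2"

definition x_sol :: "real \<Rightarrow> real"
  where "x_sol m = root m / bp"

definition y_sol :: "real \<Rightarrow> real"
  where "y_sol m = root m * ratio m / bm"

definition mass :: "real \<Rightarrow> real"
  where "mass m = p_sol m + x_sol m + y_sol m"

definition admissible :: "real \<Rightarrow> bool"
  where "admissible m \<longleftrightarrow> m < Gm \<and> m < Gp \<and> 0 < disc m \<and> 0 < lin_coeff m + sqrt (disc m)
    \<and> 0 < 1 + ratio m - root m * curv m"

lemma root_solves_quadratic:
  assumes "0 \<le> disc m" and S: "0 < lin_coeff m + sqrt (disc m)"
  shows "root m * lin_coeff m - (root m)^2 * (t * curv m / 2) = m"
proof -
  define S where "S = lin_coeff m + sqrt (disc m)"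
  have "root m * lin_coeff m - (root m)^2 * (t * curv m / 2)
      = m * (2 * lin_coeff m * S - 2 * t * curv m * m) / S\<^sup>2"
    using S by (simp add: root_def S_def[symmetric] field_simps power2_eq_square)
  also have "2 * lin_coeff m * S - 2 * t * curv m * m = S\<^sup>2"
    using assms(1) by (simp add: S_def disc_def power2_eq_square algebra_simps)
  finally show ?thesis
    using S by (simp add: S_def)
qed

lemma reduced_eqs_sol:
  assumes "m \<noteq> Gm" "0 \<le> disc m" "0 < lin_coeff m + sqrt (disc m)"
  shows "reduced_eqs s t bp bm Gp Gm (p_sol m) (x_sol m) (y_sol m)"
proof -
  have level: "p_sol m * s^2 / 2 + x_sol m * Gp + y_sol m * Gm = m"
  proof -
    have "p_sol m * s^2 / 2 + x_sol m * Gp + y_sol m * Gm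
        = root m * lin_coeff m - (root m)^2 * (t * curv m / 2)"
      using pos by (simp add: p_sol_def x_sol_def y_sol_def lin_coeff_def curv_def
          field_simps power2_eq_square)
    then show ?thesis using root_solves_quadratic assms(2,3) by simp
  qed
  have "p_sol m * s^2 - t * (bp * x_sol m + bm * y_sol m)
      + t * (x_sol m - y_sol m) * (x_sol m * bp - y_sol m * bm) = 0"
    using pos by (simp add: p_sol_def x_sol_def y_sol_def curv_def field_simps power2_eq_square)
  moreover have "x_sol m * bp * Gp - y_sol m * bm * Gm - (x_sol m * bp - y_sol m * bm) * m
      = root m * ((Gp - m) - ratio m * (Gm - m))"
    using pos by (simp add: x_sol_def y_sol_def algebra_simps)
  moreover have "ratio m * (Gm - m) = Gp - m"
    using assms(1) by (simp add: ratio_def)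
  ultimately show ?thesis by (simp add: reduced_eqs_def level)
qed

lemma admissible_0: "admissible 0"
proof -
  have "0 < ratio 0" using pos by (simp add: ratio_def)
  then have "0 < lin_coeff 0" using pos by (simp add: lin_coeff_def add_pos_pos)
  then show ?thesis using pos \<open>0 < ratio 0\<close> by (simp add: admissible_def disc_def root_def)
qed

lemma eventually_admissible: "\<forall>\<^sub>F m in nhds 0. admissible m"
proof -
  have above: "\<forall>\<^sub>F m in nhds 0. 0 < f m" if "isCont f 0" "0 < f 0" for f :: "real \<Rightarrow> real"
    using that order_tendstoD(1) isCont_def tendsto_at_iff_tendsto_nhds by blast
  have [continuous_intros]: "isCont ratio 0"
    unfolding ratio_def using pos by (auto intro!: continuous_intros)
  then have [continuous_intros]: "isCont lin_coeff 0" "isCont curv 0" "isCont disc 0"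
    unfolding lin_coeff_def curv_def disc_def using pos by (auto intro!: continuous_intros)
  have [continuous_intros]: "isCont root 0"
    using admissible_0 unfolding root_def admissible_def by (auto intro!: continuous_intros)
  have "\<forall>\<^sub>F m in nhds 0. 0 < Gm - m" "\<forall>\<^sub>F m in nhds 0. 0 < Gp - m"
    "\<forall>\<^sub>F m in nhds 0. 0 < disc m" "\<forall>\<^sub>F m in nhds 0. 0 < lin_coeff m + sqrt (disc m)"
    "\<forall>\<^sub>F m in nhds 0. 0 < 1 + ratio m - root m * curv m"
    using admissible_0 pos unfolding admissible_def
    by (intro above continuous_intros; simp)+
  then show ?thesis unfolding admissible_def by eventually_elim simp
qed

lemma admissible_sol_nonneg:
  assumes "admissible m" "0 \<le> m"
  shows "0 \<le> root m" "0 \<le> p_sol m" "0 \<le> x_sol m" "0 \<le> y_sol m"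
proof -
  show "0 \<le> root m" using assms by (simp add: admissible_def root_def)
  moreover have "0 < ratio m" using assms by (simp add: admissible_def ratio_def)
  ultimately show "0 \<le> p_sol m" "0 \<le> x_sol m" "0 \<le> y_sol m"
    using assms pos by (simp_all add: admissible_def p_sol_def x_sol_def y_sol_def)
qed

lemma continuous_on_mass:
  assumes "\<And>m. m \<in> S \<Longrightarrow> admissible m"
  shows "continuous_on S mass"
proof -
  have [continuous_intros]: "continuous_on S ratio"
    unfolding ratio_def using assms by (force simp: admissible_def intro!: continuous_intros)
  then have [continuous_intros]: "continuous_on S lin_coeff" "continuous_on S curv"
    unfolding lin_coeff_def curv_def using pos by (auto intro!: continuous_intros)
  then have [continuous_intros]: "continuous_on S root"
    unfolding root_def disc_def using assms
    by (force simp: admissible_def disc_def intro!: continuous_intros)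
  show ?thesis
    unfolding mass_def p_sol_def x_sol_def y_sol_def using pos by (auto intro!: continuous_intros)
qed

lemma mass_0: "mass 0 = 0"
  by (simp add: mass_def p_sol_def x_sol_def y_sol_def root_def)

lemma mass_pos:
  assumes "admissible m" "0 < m"
  shows "0 < mass m"
proof -
  have "0 < root m" using assms by (simp add: admissible_def root_def)
  then have "0 < x_sol m" using pos by (simp add: x_sol_def)
  then show ?thesis
    using admissible_sol_nonneg assms by (simp add: mass_def add_nonneg_pos add_pos_nonneg)
qed

theorem small_mass_solvable:
  "\<exists>\<epsilon>0>0. \<epsilon>0 < 1 \<and> (\<forall>\<epsilon>. 0 < \<epsilon> \<and> \<epsilon> \<le> \<epsilon>0 \<longrightarrow> (\<exists>p x y. 0 \<le> p \<and> 0 \<le> x \<and> 0 \<le> y \<and>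
     reduced_eqs s t bp bm Gp Gm p x y \<and> p + x + y = \<epsilon>))"
proof -
  obtain d where "d > 0" and d: "\<And>m. dist m 0 < d \<Longrightarrow> admissible m"
    using eventually_admissible unfolding eventually_nhds_metric by blast
  define m1 where "m1 = d / 2"
  have adm: "admissible m" if "m \<in> {0..m1}" for m
    using that \<open>d > 0\<close> by (intro d) (auto simp: m1_def dist_real_def)
  have "0 < m1" using \<open>d > 0\<close> by (simp add: m1_def)
  define \<epsilon>0 where "\<epsilon>0 = min (mass m1) (1/2)"
  have "0 < \<epsilon>0" "\<epsilon>0 < 1"
    using mass_pos[OF adm] \<open>0 < m1\<close> by (auto simp: \<epsilon>0_def)
  moreover have "\<exists>p x y. 0 \<le> p \<and> 0 \<le> x \<and> 0 \<le> y \<and> reduced_eqs s t bp bm Gp Gm p x y \<and> p + x + y = \<epsilon>"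
    if eps: "0 < \<epsilon>" "\<epsilon> \<le> \<epsilon>0" for \<epsilon>
  proof -
    obtain m where m: "m \<in> {0..m1}" "mass m = \<epsilon>"
      using IVT'[of mass 0 \<epsilon> m1] eps mass_0 continuous_on_mass[of "{0..m1}", OF adm] \<open>0 < m1\<close>
      by (auto simp: \<epsilon>0_def)
    then have "m \<noteq> Gm" "0 \<le> disc m" "0 < lin_coeff m + sqrt (disc m)"
      using adm[of m] by (auto simp: admissible_def)
    then show ?thesis
      using reduced_eqs_sol admissible_sol_nonneg[OF adm[OF m(1)]] m by (auto simp: mass_def)
  qed
  ultimately show ?thesis by blast
qed

end

theorem lemma17:
  fixes a :: "real \<Rightarrow> real" and al2 :: real
  assumes "C2_fun a" and "deriv a al2 > 0"
  shows "\<exists>\<delta>>0. \<forall>al1 s0 t0. 0 < s0 \<and> s0 < \<delta> \<and> 0 < t0 \<and> t0 < \<delta> \<longrightarrow>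
           (\<exists>\<epsilon>0. 0 < \<epsilon>0 \<and> \<epsilon>0 < 1 \<and>
              (\<forall>\<epsilon>. 0 < \<epsilon> \<and> \<epsilon> \<le> \<epsilon>0 \<longrightarrow>
                 (\<exists>\<gamma>::real^4. (\<forall>j. 0 \<le> \<gamma> $ j) \<and> Gmap a al1 al2 s0 t0 \<epsilon> \<gamma> = 0)))"
proof -
  have "continuous_on UNIV a"
    using C2_fun_has_real_derivative[OF assms(1)]
    by (meson DERIV_isCont continuous_at_imp_continuous_on)
  note Fint_der = Fint_has_real_derivative[OF this]
  obtain d where "d > 0" and mono: "strict_mono_on {al2-d<..<al2+d} a"
    using strict_mono_on_near_pos_deriv[OF C2_fun_has_real_derivative C2_fun_isCont_deriv]
      assms by blast
  have "\<exists>\<epsilon>0. 0 < \<epsilon>0 \<and> \<epsilon>0 < 1 \<and> (\<forall>\<epsilon>. 0 < \<epsilon> \<and> \<epsilon> \<le> \<epsilon>0 \<longrightarrow>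
          (\<exists>\<gamma>::real^4. (\<forall>j. 0 \<le> \<gamma> $ j) \<and> Gmap a al1 al2 s0 t0 \<epsilon> \<gamma> = 0))"
    if "0 < s0" "0 < t0" "t0 < d" for al1 s0 t0
  proof -
    interpret reduced_system s0 t0 "a (al2 + t0) - a al2" "a al2 - a (al2 - t0)"
      "Fint a (al2 + t0) - Fint a al2 - a al2 * t0" "Fint a (al2 - t0) - Fint a al2 + a al2 * t0"
      using that above_tangent_if_strict_mono_deriv[OF Fint_der mono, of t0]
        strict_mono_onD[OF mono, of al2 "al2 + t0"] strict_mono_onD[OF mono, of "al2 - t0" al2]
      by unfold_locales auto
    show ?thesis
      using small_mass_solvable by (blast intro: Gmap_has_nonneg_zero_if_reduced_eqs)
  qed
  then show ?thesis using \<open>d > 0\<close> by blast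
qed

end
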